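(* Let $Q$ be a dimer quiver with dimer algebra $A_Q$, and let $t:=\sum_{i\in Q_0}u_i\in A_Q$. Then $\mathbb{C}[t]\subseteq Z(A_Q)$, the centre of $A_Q$.
   Context: A quiver with faces is a finite quiver $Q=(Q_0,Q_1)$ with a finite set $Q_2$ of faces and a map $\partial$ sending each face to an oriented cycle. A dimer quiver is one with $Q_2=Q_2^+\sqcup Q_2^-$ such that: no loops; each arrow lies on the boundary of one or two faces, and if two, one in $Q_2^+$ and one in $Q_2^-$; at each vertex $i$ the incidence graph (vertices: arrows at $i$; edge between $\alpha,\beta$ if "$\alpha$ into $i$, $\beta$ out of $i$" is part of a face boundary) is non-empty and connected. An arrow is internal if it lies on two faces. Paths compose left to right. The dimer algebra $A_Q$ is the path algebra $\mathbb{C}Q$ modulo the ideal generated by $p_{F_1}-p_{F_2}$ for each internal arrow $\alpha$, where $F_1\in Q_2^+$, $F_2\in Q_2^-$ are the two faces containing $\alpha$ and $\alpha p_{F_j}$ is $\partial F_j$ read starting with $\alpha$. For each vertex $i$, the boundary cycles of all faces through $i$, read as cycles starting and ending at $i$, are equal in $A_Q$; $u_i$ denotes this element. *)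

theory Defs
  imports Complex_Main "HOL-Computational_Algebra.Polynomial"
begin

text \<open>A quiver with faces: vertices Q0, arrows Q1 with source/target maps,
  faces Q2 = Q2p \<union> Q2m (disjoint), and a boundary map bd sending each face to
  an oriented cycle, given as a nonempty list of arrows.\<close>

record ('v, 'a, 'f) qwf =
  Q0 :: "'v set"
  Q1 :: "'a set"
  src :: "'a \<Rightarrow> 'v"
  tgt :: "'a \<Rightarrow> 'v"
  Q2p :: "'f set"
  Q2m :: "'f set"
  bd :: "'f \<Rightarrow> 'a list"

definition Q2 :: "('v, 'a, 'f) qwf \<Rightarrow> 'f set" where
  "Q2 Q = Q2p Q \<union> Q2m Q"

text \<open>Paths: a start vertex together with a list of arrows (composed left to right).
  The trivial path at i is (i, []).\<close>

type_synonym ('v, 'a) path = "'v \<times> 'a list"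

definition composable_list :: "('v, 'a, 'f) qwf \<Rightarrow> 'a list \<Rightarrow> bool" where
  "composable_list Q as \<longleftrightarrow> (\<forall>k. Suc k < length as \<longrightarrow> tgt Q (as ! k) = src Q (as ! Suc k))"

definition valid_path :: "('v, 'a, 'f) qwf \<Rightarrow> ('v, 'a) path \<Rightarrow> bool" where
  "valid_path Q p \<longleftrightarrow> fst p \<in> Q0 Q \<and> set (snd p) \<subseteq> Q1 Q \<and>
     (snd p \<noteq> [] \<longrightarrow> src Q (hd (snd p)) = fst p) \<and> composable_list Q (snd p)"

definition vert_at :: "('v, 'a, 'f) qwf \<Rightarrow> ('v, 'a) path \<Rightarrow> nat \<Rightarrow> 'v" where
  "vert_at Q p k = (if k = 0 then fst p else tgt Q (snd p ! (k - 1)))"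

definition is_cycle :: "('v, 'a, 'f) qwf \<Rightarrow> 'a list \<Rightarrow> bool" where
  "is_cycle Q c \<longleftrightarrow> c \<noteq> [] \<and> valid_path Q (src Q (hd c), c) \<and> tgt Q (last c) = src Q (hd c)"

definition consec_in :: "'a list \<Rightarrow> 'a \<Rightarrow> 'a \<Rightarrow> bool" where
  "consec_in c \<alpha> \<beta> \<longleftrightarrow> (\<exists>k < length c. c ! k = \<alpha> \<and> c ! ((Suc k) mod length c) = \<beta>)"

definition arrows_at :: "('v, 'a, 'f) qwf \<Rightarrow> 'v \<Rightarrow> 'a set" where
  "arrows_at Q i = {\<alpha> \<in> Q1 Q. src Q \<alpha> = i \<or> tgt Q \<alpha> = i}"

definition inc_edge :: "('v, 'a, 'f) qwf \<Rightarrow> 'v \<Rightarrow> 'a \<Rightarrow> 'a \<Rightarrow> bool" where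
  "inc_edge Q i \<alpha> \<beta> \<longleftrightarrow> \<alpha> \<in> Q1 Q \<and> \<beta> \<in> Q1 Q \<and> tgt Q \<alpha> = i \<and> src Q \<beta> = i \<and>
     (\<exists>F \<in> Q2 Q. consec_in (bd Q F) \<alpha> \<beta>)"

definition inc_connected :: "('v, 'a, 'f) qwf \<Rightarrow> 'v \<Rightarrow> bool" where
  "inc_connected Q i \<longleftrightarrow>
     (\<forall>\<alpha> \<in> arrows_at Q i. \<forall>\<beta> \<in> arrows_at Q i.
        (\<alpha>, \<beta>) \<in> {(x, y). inc_edge Q i x y \<or> inc_edge Q i y x}\<^sup>*)"

definition occ :: "('v, 'a, 'f) qwf \<Rightarrow> 'a \<Rightarrow> nat" where
  "occ Q \<alpha> = (\<Sum>F \<in> Q2 Q. count_list (bd Q F) \<alpha>)"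

definition dimer_quiver :: "('v, 'a, 'f) qwf \<Rightarrow> bool" where
  "dimer_quiver Q \<longleftrightarrow>
     finite (Q0 Q) \<and> finite (Q1 Q) \<and> finite (Q2 Q) \<and>
     Q2p Q \<inter> Q2m Q = {} \<and>
     (\<forall>\<alpha> \<in> Q1 Q. src Q \<alpha> \<in> Q0 Q \<and> tgt Q \<alpha> \<in> Q0 Q) \<and>
     (\<forall>F \<in> Q2 Q. is_cycle Q (bd Q F)) \<and>
     (\<forall>\<alpha> \<in> Q1 Q. src Q \<alpha> \<noteq> tgt Q \<alpha>) \<and>
     (\<forall>\<alpha> \<in> Q1 Q. (occ Q \<alpha> = 1 \<or> occ Q \<alpha> = 2) \<and>
        (occ Q \<alpha> = 2 \<longrightarrow> (\<exists>F1 \<in> Q2p Q. \<exists>F2 \<in> Q2m Q. \<alpha> \<in> set (bd Q F1) \<and> \<alpha> \<in> set (bd Q F2)))) \<and>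
     (\<forall>i \<in> Q0 Q. arrows_at Q i \<noteq> {} \<and> inc_connected Q i)"

text \<open>Elements of the path algebra are complex-valued functions on paths, with finite
  support consisting of valid paths.\<close>

type_synonym ('v, 'a) pelem = "('v, 'a) path \<Rightarrow> complex"

definition in_pathalg :: "('v, 'a, 'f) qwf \<Rightarrow> ('v, 'a) pelem \<Rightarrow> bool" where
  "in_pathalg Q x \<longleftrightarrow> finite {p. x p \<noteq> 0} \<and> (\<forall>p. x p \<noteq> 0 \<longrightarrow> valid_path Q p)"

definition basis :: "('v, 'a) path \<Rightarrow> ('v, 'a) pelem" where
  "basis p = (\<lambda>q. if q = p then 1 else 0)"

definition padd :: "('v, 'a) pelem \<Rightarrow> ('v, 'a) pelem \<Rightarrow> ('v, 'a) pelem" where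
  "padd x y = (\<lambda>p. x p + y p)"

definition psub :: "('v, 'a) pelem \<Rightarrow> ('v, 'a) pelem \<Rightarrow> ('v, 'a) pelem" where
  "psub x y = (\<lambda>p. x p - y p)"

definition pscale :: "complex \<Rightarrow> ('v, 'a) pelem \<Rightarrow> ('v, 'a) pelem" where
  "pscale c x = (\<lambda>p. c * x p)"

text \<open>Multiplication (concatenation of paths, left to right), extended bilinearly:
  the coefficient of a path is summed over all its splittings.\<close>
definition pmult :: "('v, 'a, 'f) qwf \<Rightarrow> ('v, 'a) pelem \<Rightarrow> ('v, 'a) pelem \<Rightarrow> ('v, 'a) pelem" where
  "pmult Q x y = (\<lambda>p. if valid_path Q p then
      (\<Sum>k \<in> {0..length (snd p)}. x (fst p, take k (snd p)) * y (vert_at Q p k, drop k (snd p)))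
    else 0)"

definition punit :: "('v, 'a, 'f) qwf \<Rightarrow> ('v, 'a) pelem" where
  "punit Q = (\<lambda>p. \<Sum>i \<in> Q0 Q. basis (i, []) p)"

definition internal :: "('v, 'a, 'f) qwf \<Rightarrow> 'a \<Rightarrow> bool" where
  "internal Q \<alpha> \<longleftrightarrow> \<alpha> \<in> Q1 Q \<and> occ Q \<alpha> = 2"

definition rot_at :: "'a list \<Rightarrow> nat \<Rightarrow> 'a list" where
  "rot_at c k = drop k c @ take k c"

text \<open>p_F for arrow \<alpha> = c!k on the boundary c of F: the boundary read starting with \<alpha>,
  with \<alpha> removed; it is a path from tgt \<alpha> to src \<alpha>.\<close>
definition pF :: "('v, 'a, 'f) qwf \<Rightarrow> 'f \<Rightarrow> nat \<Rightarrow> ('v, 'a) path" where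
  "pF Q F k = (tgt Q (bd Q F ! k), tl (rot_at (bd Q F) k))"

definition dimer_relations :: "('v, 'a, 'f) qwf \<Rightarrow> ('v, 'a) pelem set" where
  "dimer_relations Q = {psub (basis (pF Q F1 k1)) (basis (pF Q F2 k2)) | \<alpha> F1 F2 k1 k2.
      internal Q \<alpha> \<and> F1 \<in> Q2p Q \<and> F2 \<in> Q2m Q \<and>
      k1 < length (bd Q F1) \<and> bd Q F1 ! k1 = \<alpha> \<and>
      k2 < length (bd Q F2) \<and> bd Q F2 ! k2 = \<alpha>}"

inductive_set dimer_ideal :: "('v, 'a, 'f) qwf \<Rightarrow> ('v, 'a) pelem set" for Q where
  zero: "(\<lambda>_. 0) \<in> dimer_ideal Q"
| rel: "r \<in> dimer_relations Q \<Longrightarrow> r \<in> dimer_ideal Q"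
| add: "x \<in> dimer_ideal Q \<Longrightarrow> y \<in> dimer_ideal Q \<Longrightarrow> padd x y \<in> dimer_ideal Q"
| scale: "x \<in> dimer_ideal Q \<Longrightarrow> pscale c x \<in> dimer_ideal Q"
| lmult: "x \<in> dimer_ideal Q \<Longrightarrow> valid_path Q p \<Longrightarrow> pmult Q (basis p) x \<in> dimer_ideal Q"
| rmult: "x \<in> dimer_ideal Q \<Longrightarrow> valid_path Q p \<Longrightarrow> pmult Q x (basis p) \<in> dimer_ideal Q"

text \<open>Equality in \<open>A_Q = \<complex>Q / I\<close>.\<close>
definition dimer_eq :: "('v, 'a, 'f) qwf \<Rightarrow> ('v, 'a) pelem \<Rightarrow> ('v, 'a) pelem \<Rightarrow> bool" where
  "dimer_eq Q x y \<longleftrightarrow> psub x y \<in> dimer_ideal Q"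

text \<open>u_i: the boundary cycle of a face through i, read as a cycle starting and ending at i
  (a choice of representative; all such choices agree in \<open>A_Q\<close>).\<close>
definition face_cycles_at :: "('v, 'a, 'f) qwf \<Rightarrow> 'v \<Rightarrow> ('v, 'a) path set" where
  "face_cycles_at Q i = {(i, rot_at (bd Q F) k) | F k.
      F \<in> Q2 Q \<and> k < length (bd Q F) \<and> src Q (bd Q F ! k) = i}"

definition u_elem :: "('v, 'a, 'f) qwf \<Rightarrow> 'v \<Rightarrow> ('v, 'a) pelem" where
  "u_elem Q i = basis (SOME c. c \<in> face_cycles_at Q i)"

definition t_elem :: "('v, 'a, 'f) qwf \<Rightarrow> ('v, 'a) pelem" where
  "t_elem Q = (\<lambda>p. \<Sum>i \<in> Q0 Q. u_elem Q i p)"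

fun ppow :: "('v, 'a, 'f) qwf \<Rightarrow> ('v, 'a) pelem \<Rightarrow> nat \<Rightarrow> ('v, 'a) pelem" where
  "ppow Q x 0 = punit Q"
| "ppow Q x (Suc n) = pmult Q x (ppow Q x n)"

definition peval :: "('v, 'a, 'f) qwf \<Rightarrow> complex poly \<Rightarrow> ('v, 'a) pelem \<Rightarrow> ('v, 'a) pelem" where
  "peval Q f x = (\<lambda>p. \<Sum>k \<in> {0..degree f}. coeff f k * ppow Q x k p)"

definition central :: "('v, 'a, 'f) qwf \<Rightarrow> ('v, 'a) pelem \<Rightarrow> bool" where
  "central Q z \<longleftrightarrow> (\<forall>x. in_pathalg Q x \<longrightarrow> dimer_eq Q (pmult Q z x) (pmult Q x z))"

end

theory Submission
  imports Defs
begin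

(* Let an internal arrow \<alpha> lie on the faces F1 and F2. Multiplying the relation p_F1 = p_F2
   by \<alpha> on the left, resp. on the right, shows that the boundary cycles of F1 and F2 read
   from the source of \<alpha>, resp. from its target, agree in A_Q. Two arrows that are consecutive at
   a vertex i on a face share that face's cycle at i, so connectedness of the incidence graph at
   i makes all face cycles through i equal: u_i is well defined. Reading a face cycle through \<alpha>
   before and after \<alpha> gives u_i \<alpha> = \<alpha> u_j for \<alpha> : i \<rightarrow> j, hence u_i p = p u_j for
   every path p from i to j. As u_i p vanishes unless p starts at i, this says t p = p t;
   so t is central, and centrality passes to powers and linear combinations of t. *)

definition path_cat :: "('v, 'a) path \<Rightarrow> ('v, 'a) path \<Rightarrow> ('v, 'a) path" where
  "path_cat p q = (fst p, snd p @ snd q)"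

definition path_end :: "('v, 'a, 'f) qwf \<Rightarrow> ('v, 'a) path \<Rightarrow> 'v" where
  "path_end Q p = vert_at Q p (length (snd p))"

lemma path_end_simp: "path_end Q (v, as) = (if as = [] then v else tgt Q (last as))"
  by (simp add: path_end_def vert_at_def last_conv_nth)

lemma fst_path_cat [simp]: "fst (path_cat p q) = fst p"
  by (simp add: path_cat_def)

lemma path_cat_assoc: "path_cat (path_cat p q) r = path_cat p (path_cat q r)"
  by (simp add: path_cat_def)

lemma vert_at_append: "k \<le> length as \<Longrightarrow> vert_at Q (v, as @ bs) k = vert_at Q (v, as) k"
  by (auto simp: vert_at_def nth_append)

lemma vert_at_path_cat: "vert_at Q (path_cat p q) (length (snd p)) = path_end Q p"
  by (cases p) (simp add: path_cat_def path_end_def vert_at_append)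

lemma composable_list_append:
  "composable_list Q (as @ bs) \<longleftrightarrow> composable_list Q as \<and> composable_list Q bs \<and>
     (as \<noteq> [] \<longrightarrow> bs \<noteq> [] \<longrightarrow> tgt Q (last as) = src Q (hd bs))"
proof
  assume H: "composable_list Q (as @ bs)"
  have step: "Suc k < length as + length bs \<Longrightarrow> tgt Q ((as @ bs) ! k) = src Q ((as @ bs) ! Suc k)" for k
    using H by (simp add: composable_list_def)
  have "composable_list Q as"
    unfolding composable_list_def
  proof (intro allI impI)
    fix k assume "Suc k < length as"
    then show "tgt Q (as ! k) = src Q (as ! Suc k)" using step[of k] by (simp add: nth_append)
  qed
  moreover have "composable_list Q bs"
    unfolding composable_list_def
  proof (intro allI impI)
    fix k assume "Suc k < length bs"
    then show "tgt Q (bs ! k) = src Q (bs ! Suc k)" using step[of "length as + k"] by (simp add: nth_append)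
  qed
  moreover have "tgt Q (last as) = src Q (hd bs)" if "as \<noteq> []" "bs \<noteq> []"
    using step[of "length as - 1"] that by (simp add: nth_append last_conv_nth hd_conv_nth)
  ultimately show "composable_list Q as \<and> composable_list Q bs \<and>
     (as \<noteq> [] \<longrightarrow> bs \<noteq> [] \<longrightarrow> tgt Q (last as) = src Q (hd bs))" by blast
next
  assume H: "composable_list Q as \<and> composable_list Q bs \<and>
     (as \<noteq> [] \<longrightarrow> bs \<noteq> [] \<longrightarrow> tgt Q (last as) = src Q (hd bs))"
  show "composable_list Q (as @ bs)" unfolding composable_list_def
  proof (intro allI impI)
    fix k assume k: "Suc k < length (as @ bs)"
    consider "Suc k < length as" | "Suc k = length as" | "length as \<le> k" by linarith
    then show "tgt Q ((as @ bs) ! k) = src Q ((as @ bs) ! Suc k)"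
    proof cases
      case 1
      then show ?thesis using H by (simp add: nth_append composable_list_def)
    next
      case 2
      then have "k = length as - 1" "as \<noteq> []" "bs \<noteq> []" using k by auto
      then show ?thesis using H by (auto simp: nth_append last_conv_nth hd_conv_nth)
    next
      case 3
      then obtain m where "k = length as + m" by (metis le_iff_add)
      then show ?thesis using H k by (simp add: nth_append composable_list_def)
    qed
  qed
qed

lemma composable_list_singleton [simp]: "composable_list Q [\<alpha>]"
  by (simp add: composable_list_def)

lemma valid_path_cat:
  assumes "valid_path Q p" "valid_path Q q" "path_end Q p = fst q"
  shows "valid_path Q (path_cat p q)"
  using assms
  by (cases p; cases q) (auto simp: path_cat_def valid_path_def path_end_simp
      composable_list_append split: if_splits)

lemma path_end_cat: "path_end Q p = fst q \<Longrightarrow> path_end Q (path_cat p q) = path_end Q q"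
  by (cases p; cases q) (auto simp: path_cat_def path_end_simp)

lemma valid_path_Cons:
  assumes "\<forall>\<alpha>\<in>Q1 Q. tgt Q \<alpha> \<in> Q0 Q"
  shows "valid_path Q (v, \<alpha> # as) \<longleftrightarrow>
    v \<in> Q0 Q \<and> \<alpha> \<in> Q1 Q \<and> src Q \<alpha> = v \<and> valid_path Q (tgt Q \<alpha>, as)"
  using composable_list_append[of Q "[\<alpha>]" as] assms by (auto simp: valid_path_def)

lemma valid_path_take: "valid_path Q (v, as) \<Longrightarrow> valid_path Q (v, take k as)"
  using composable_list_append[of Q "take k as" "drop k as"]
  by (auto simp: valid_path_def dest: in_set_takeD)

lemma vert_at_take: "j \<le> k \<Longrightarrow> vert_at Q (v, take k as) j = vert_at Q (v, as) j"
  by (auto simp: vert_at_def)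

lemma vert_at_drop:
  "k + m \<le> length as \<Longrightarrow> vert_at Q (vert_at Q (v, as) k, drop k as) m = vert_at Q (v, as) (k + m)"
  by (auto simp: vert_at_def)

lemma vert_at_in_Q0:
  assumes "\<forall>\<alpha>\<in>Q1 Q. tgt Q \<alpha> \<in> Q0 Q" "valid_path Q (v, as)" "k \<le> length as"
  shows "vert_at Q (v, as) k \<in> Q0 Q"
  using assms nth_mem[of "k - 1" as] by (auto simp: vert_at_def valid_path_def subset_iff)

lemma path_end_in_Q0: "\<forall>\<alpha>\<in>Q1 Q. tgt Q \<alpha> \<in> Q0 Q \<Longrightarrow> valid_path Q p \<Longrightarrow> path_end Q p \<in> Q0 Q"
  by (cases p) (simp add: path_end_def vert_at_in_Q0)

lemma src_nth_eq_vert_at: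
  assumes "valid_path Q (v, as)" "k < length as"
  shows "src Q (as ! k) = vert_at Q (v, as) k"
  using assms
  by (cases k) (auto simp: valid_path_def vert_at_def hd_conv_nth composable_list_def)

lemma valid_path_drop:
  assumes "\<forall>\<alpha>\<in>Q1 Q. tgt Q \<alpha> \<in> Q0 Q" "valid_path Q (v, as)" "k \<le> length as"
  shows "valid_path Q (vert_at Q (v, as) k, drop k as)"
proof -
  have "composable_list Q (drop k as)"
    using composable_list_append[of Q "take k as" "drop k as"] assms(2) by (simp add: valid_path_def)
  moreover have "drop k as \<noteq> [] \<Longrightarrow> src Q (hd (drop k as)) = vert_at Q (v, as) k"
    using src_nth_eq_vert_at[OF assms(2), of k] by (simp add: hd_drop_conv_nth)
  ultimately show ?thesis using vert_at_in_Q0[OF assms] assms(2)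
    by (auto simp: valid_path_def dest: in_set_dropD)
qed

section \<open>The path algebra\<close>

lemma take_drop_eq_iff:
  "k \<le> length xs \<Longrightarrow> (take k xs = ys \<and> drop k xs = zs) \<longleftrightarrow> (xs = ys @ zs \<and> k = length ys)"
  by (metis append_eq_conv_conj append_take_drop_id length_take min_absorb2)

lemma pmult_basis_basis:
  fixes Q :: "('v, 'a, 'f) qwf"
  shows "pmult Q (basis p) (basis q) =
    (if valid_path Q (path_cat p q) \<and> vert_at Q (path_cat p q) (length (snd p)) = fst q
     then basis (path_cat p q) else (\<lambda>_. 0))"
proof (rule ext)
  fix r :: "('v, 'a) path"
  obtain v as where p: "p = (v, as)" by (cases p)
  obtain w bs where q: "q = (w, bs)" by (cases q)
  define C where "C \<longleftrightarrow> fst r = v \<and> snd r = as @ bs \<and> vert_at Q r (length as) = w"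
  have summand: "basis p (fst r, take k (snd r)) * basis q (vert_at Q r k, drop k (snd r)) =
      (if k = length as then (if C then 1 else 0) else 0)" if "k \<le> length (snd r)" for k
  proof -
    have "basis p (fst r, take k (snd r)) * basis q (vert_at Q r k, drop k (snd r)) =
        (if fst r = v \<and> (take k (snd r) = as \<and> drop k (snd r) = bs) \<and> vert_at Q r k = w
         then 1 else 0)"
      by (simp add: basis_def p q)
    also have "\<dots> = (if k = length as then (if C then 1 else 0) else 0)"
      unfolding take_drop_eq_iff[OF that] C_def by auto
    finally show ?thesis .
  qed
  have "(\<Sum>k\<in>{0..length (snd r)}.
        basis p (fst r, take k (snd r)) * basis q (vert_at Q r k, drop k (snd r))) =
      (\<Sum>k\<in>{0..length (snd r)}. if k = length as then (if C then 1 else 0) else 0)"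
    by (rule sum.cong) (simp_all add: summand)
  also have "\<dots> = (if C then 1 else 0)"
    by (auto simp: C_def)
  finally have "pmult Q (basis p) (basis q) r = (if valid_path Q r \<and> C then 1 else 0)"
    by (simp add: pmult_def)
  then show "pmult Q (basis p) (basis q) r =
    (if valid_path Q (path_cat p q) \<and> vert_at Q (path_cat p q) (length (snd p)) = fst q
     then basis (path_cat p q) else (\<lambda>_. 0)) r"
    unfolding C_def by (cases r) (auto simp: p q path_cat_def basis_def)
qed

lemma pmult_basis_basis_valid:
  assumes "valid_path Q p" "valid_path Q q"
  shows "pmult Q (basis p) (basis q) =
    (if path_end Q p = fst q then basis (path_cat p q) else (\<lambda>_. 0))"
  using assms valid_path_cat[OF assms] by (simp add: pmult_basis_basis vert_at_path_cat)

lemma pmult_basis_path_cat: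
  "valid_path Q p \<Longrightarrow> valid_path Q q \<Longrightarrow> path_end Q p = fst q \<Longrightarrow>
    pmult Q (basis p) (basis q) = basis (path_cat p q)"
  by (simp add: pmult_basis_basis_valid)

lemma pmult_sum_left: "pmult Q (\<lambda>r. \<Sum>i\<in>I. x i r) y = (\<lambda>r. \<Sum>i\<in>I. pmult Q (x i) y r)"
  by (rule ext) (auto simp: pmult_def sum_distrib_right intro: sum.swap)

lemma pmult_sum_right: "pmult Q y (\<lambda>r. \<Sum>i\<in>I. x i r) = (\<lambda>r. \<Sum>i\<in>I. pmult Q y (x i) r)"
  by (rule ext) (auto simp: pmult_def sum_distrib_left intro: sum.swap)

lemma pmult_scale_left: "pmult Q (\<lambda>r. c * x r) y = (\<lambda>r. c * pmult Q x y r)"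
  by (rule ext) (auto simp: pmult_def sum_distrib_left mult.assoc)

lemma pmult_scale_right: "pmult Q y (\<lambda>r. c * x r) = (\<lambda>r. c * pmult Q y x r)"
  by (rule ext) (auto simp: pmult_def sum_distrib_left mult.left_commute)

lemma pmult_psub_left: "pmult Q (psub x z) y = psub (pmult Q x y) (pmult Q z y)"
  by (rule ext) (auto simp: pmult_def psub_def sum_subtractf left_diff_distrib)

lemma pmult_psub_right: "pmult Q y (psub x z) = psub (pmult Q y x) (pmult Q y z)"
  by (rule ext) (auto simp: pmult_def psub_def sum_subtractf right_diff_distrib)

lemma sum_atLeastAtMost_triangle_swap:
  "(\<Sum>k\<in>{0..n::nat}. \<Sum>j\<in>{0..k}. g j k) = (\<Sum>j\<in>{0..n}. \<Sum>k\<in>{j..n}. g j k)"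
  by (induction n) (simp_all add: sum.distrib add_ac)

lemma pmult_apply_take:
  fixes Q :: "('v, 'a, 'f) qwf"
  assumes "valid_path Q (v, as)" "k \<le> length as"
  shows "pmult Q x y (v, take k as) =
    (\<Sum>j\<in>{0..k}. x (v, take j as) * y (vert_at Q (v, as) j, drop j (take k as)))"
  using assms valid_path_take[OF assms(1), of k] by (simp add: pmult_def min_absorb2 vert_at_take)

lemma pmult_apply_drop:
  fixes Q :: "('v, 'a, 'f) qwf"
  assumes "\<forall>\<alpha>\<in>Q1 Q. tgt Q \<alpha> \<in> Q0 Q" "valid_path Q (v, as)" "j \<le> length as"
  defines "p \<equiv> (v, as)"
  shows "pmult Q y z (vert_at Q p j, drop j as) =
    (\<Sum>k\<in>{j..length as}. y (vert_at Q p j, drop j (take k as)) * z (vert_at Q p k, drop k as))"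
proof -
  have "pmult Q y z (vert_at Q p j, drop j as) =
     (\<Sum>m\<in>{0..length as - j}. y (vert_at Q p j, drop j (take (m + j) as)) *
        z (vert_at Q p (m + j), drop (m + j) as))"
    using assms valid_path_drop[OF assms(1,2,3)]
    by (simp add: pmult_def take_drop add.commute vert_at_drop)
  also have "\<dots> = (\<Sum>k\<in>{0 + j..length as - j + j}. y (vert_at Q p j, drop j (take k as)) *
      z (vert_at Q p k, drop k as))"
    by (rule sum.shift_bounds_cl_nat_ivl[symmetric])
  finally show ?thesis using assms(3) by simp
qed

lemma pmult_assoc:
  fixes Q :: "('v, 'a, 'f) qwf"
  assumes tgt_in: "\<forall>\<alpha>\<in>Q1 Q. tgt Q \<alpha> \<in> Q0 Q"
  shows "pmult Q (pmult Q x y) z = pmult Q x (pmult Q y z)"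
proof (rule ext)
  fix p :: "('v, 'a) path"
  obtain v as where p: "p = (v, as)" by (cases p)
  show "pmult Q (pmult Q x y) z p = pmult Q x (pmult Q y z) p"
  proof (cases "valid_path Q p")
    case False
    then show ?thesis by (simp add: pmult_def)
  next
    case True
    let ?n = "length as"
    define g where "g j k = x (v, take j as) * y (vert_at Q p j, drop j (take k as)) *
      z (vert_at Q p k, drop k as)" for j k
    have "pmult Q (pmult Q x y) z p =
        (\<Sum>k\<in>{0..?n}. pmult Q x y (v, take k as) * z (vert_at Q p k, drop k as))"
      using True unfolding pmult_def[of Q "pmult Q x y" z] by (simp add: p)
    also have "\<dots> = (\<Sum>k\<in>{0..?n}. \<Sum>j\<in>{0..k}. g j k)"
      using True by (intro sum.cong) (simp_all add: pmult_apply_take g_def sum_distrib_right p)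
    also have "\<dots> = (\<Sum>j\<in>{0..?n}. \<Sum>k\<in>{j..?n}. g j k)"
      by (rule sum_atLeastAtMost_triangle_swap)
    also have "\<dots> = (\<Sum>j\<in>{0..?n}. x (v, take j as) * pmult Q y z (vert_at Q p j, drop j as))"
      using True by (intro sum.cong) (simp_all add: pmult_apply_drop[OF tgt_in] g_def
        sum_distrib_left mult.assoc p)
    also have "\<dots> = pmult Q x (pmult Q y z) p"
      using True unfolding pmult_def[of Q x "pmult Q y z"] by (simp add: p)
    finally show ?thesis .
  qed
qed

lemma punit_apply:
  assumes "finite (Q0 Q)"
  shows "punit Q (v, as) = (if as = [] \<and> v \<in> Q0 Q then 1 else 0)"
  using assms by (cases "as = []") (simp_all add: punit_def basis_def)

lemma pmult_punit_left:
  fixes Q :: "('v, 'a, 'f) qwf"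
  assumes "finite (Q0 Q)" "in_pathalg Q x"
  shows "pmult Q (punit Q) x = x"
proof (rule ext)
  fix p :: "('v, 'a) path"
  obtain v as where p: "p = (v, as)" by (cases p)
  show "pmult Q (punit Q) x p = x p"
  proof (cases "valid_path Q p")
    case True
    then have "v \<in> Q0 Q" by (simp add: valid_path_def p)
    then have summand: "punit Q (v, take k as) * x (vert_at Q p k, drop k as) =
        (if k = 0 then x p else 0)" if "k \<le> length as" for k
      using assms(1) that by (auto simp: punit_apply vert_at_def p)
    have "pmult Q (punit Q) x p =
        (\<Sum>k\<in>{0..length as}. punit Q (v, take k as) * x (vert_at Q p k, drop k as))"
      using True by (simp add: pmult_def p)
    also have "\<dots> = (\<Sum>k\<in>{0..length as}. if k = 0 then x p else 0)"
      using summand by (intro sum.cong) auto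
    finally show ?thesis by simp
  next
    case False
    moreover have "x p = 0" using False assms(2) unfolding in_pathalg_def by blast
    ultimately show ?thesis by (simp add: pmult_def)
  qed
qed

lemma pmult_punit_right:
  fixes Q :: "('v, 'a, 'f) qwf"
  assumes "finite (Q0 Q)" "\<forall>\<alpha>\<in>Q1 Q. tgt Q \<alpha> \<in> Q0 Q" "in_pathalg Q x"
  shows "pmult Q x (punit Q) = x"
proof (rule ext)
  fix p :: "('v, 'a) path"
  obtain v as where p: "p = (v, as)" by (cases p)
  show "pmult Q x (punit Q) p = x p"
  proof (cases "valid_path Q p")
    case True
    have "vert_at Q p (length as) \<in> Q0 Q" using vert_at_in_Q0[OF assms(2)] True p by simp
    then have summand: "x (v, take k as) * punit Q (vert_at Q p k, drop k as) =
        (if k = length as then x p else 0)" if "k \<le> length as" for k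
      using assms(1) that by (auto simp: punit_apply p)
    have "pmult Q x (punit Q) p =
        (\<Sum>k\<in>{0..length as}. x (v, take k as) * punit Q (vert_at Q p k, drop k as))"
      using True by (simp add: pmult_def p)
    also have "\<dots> = (\<Sum>k\<in>{0..length as}. if k = length as then x p else 0)"
      using summand by (intro sum.cong) auto
    finally show ?thesis by simp
  next
    case False
    moreover have "x p = 0" using False assms(3) unfolding in_pathalg_def by blast
    ultimately show ?thesis by (simp add: pmult_def)
  qed
qed

lemma in_pathalg_pmult:
  assumes "in_pathalg Q x" "in_pathalg Q y"
  shows "in_pathalg Q (pmult Q x y)"
proof -
  let ?S = "(\<lambda>(p, q). path_cat p q) ` ({p. x p \<noteq> 0} \<times> {q. y q \<noteq> 0})"
  have "{r. pmult Q x y r \<noteq> 0} \<subseteq> ?S"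
  proof
    fix r assume "r \<in> {r. pmult Q x y r \<noteq> 0}"
    then have "(\<Sum>k\<in>{0..length (snd r)}.
        x (fst r, take k (snd r)) * y (vert_at Q r k, drop k (snd r))) \<noteq> 0"
      by (simp add: pmult_def split: if_splits)
    then obtain k where "x (fst r, take k (snd r)) * y (vert_at Q r k, drop k (snd r)) \<noteq> 0"
      by (rule sum.not_neutral_contains_not_neutral)
    moreover have "r = path_cat (fst r, take k (snd r)) (vert_at Q r k, drop k (snd r))"
      by (simp add: path_cat_def)
    ultimately show "r \<in> ?S" by force
  qed
  moreover have "finite ?S" using assms by (simp add: in_pathalg_def)
  ultimately have "finite {r. pmult Q x y r \<noteq> 0}" by (rule finite_subset)
  then show ?thesis by (simp add: in_pathalg_def pmult_def)
qed

lemma in_pathalg_punit: "finite (Q0 Q) \<Longrightarrow> in_pathalg Q (punit Q)"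
  by (auto simp: in_pathalg_def punit_apply valid_path_def composable_list_def
      intro: finite_subset[of _ "(\<lambda>i. (i, [])) ` Q0 Q"] split: if_splits)

lemma in_pathalg_ppow:
  "finite (Q0 Q) \<Longrightarrow> in_pathalg Q x \<Longrightarrow> in_pathalg Q (ppow Q x n)"
  by (induction n) (simp_all add: in_pathalg_punit in_pathalg_pmult)

lemma in_pathalg_basis_expansion:
  assumes "in_pathalg Q x"
  shows "x = (\<lambda>r. \<Sum>p\<in>{p. x p \<noteq> 0}. x p * basis p r)"
proof (rule ext)
  fix r
  have "(\<Sum>p\<in>{p. x p \<noteq> 0}. x p * basis p r) = (\<Sum>p\<in>{p. x p \<noteq> 0}. if p = r then x r else 0)"
    by (rule sum.cong) (auto simp: basis_def)
  also have "\<dots> = x r" using assms by (simp add: in_pathalg_def)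
  finally show "x r = (\<Sum>p\<in>{p. x p \<noteq> 0}. x p * basis p r)" by simp
qed

lemma dimer_ideal_scale: "x \<in> dimer_ideal Q \<Longrightarrow> (\<lambda>r. c * x r) \<in> dimer_ideal Q"
  using dimer_ideal.scale[of x Q c] by (simp add: pscale_def)

lemma dimer_ideal_sum:
  "finite S \<Longrightarrow> (\<And>i. i \<in> S \<Longrightarrow> x i \<in> dimer_ideal Q) \<Longrightarrow> (\<lambda>r. \<Sum>i\<in>S. x i r) \<in> dimer_ideal Q"
proof (induction S rule: finite_induct)
  case empty
  then show ?case using dimer_ideal.zero by simp
next
  case (insert a S)
  then have "padd (x a) (\<lambda>r. \<Sum>i\<in>S. x i r) \<in> dimer_ideal Q" by (simp add: dimer_ideal.add)
  then show ?case using insert.hyps by (simp add: padd_def)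
qed

lemma dimer_ideal_pmult_left:
  assumes "in_pathalg Q z" "x \<in> dimer_ideal Q"
  shows "pmult Q z x \<in> dimer_ideal Q"
proof -
  have "pmult Q z x = (\<lambda>r. \<Sum>p\<in>{p. z p \<noteq> 0}. z p * pmult Q (basis p) x r)"
    by (subst in_pathalg_basis_expansion[OF assms(1)]) (simp add: pmult_sum_left pmult_scale_left)
  then show ?thesis using assms
    by (auto simp: in_pathalg_def intro!: dimer_ideal_sum dimer_ideal_scale dimer_ideal.lmult)
qed

lemma dimer_ideal_pmult_right:
  assumes "in_pathalg Q z" "x \<in> dimer_ideal Q"
  shows "pmult Q x z \<in> dimer_ideal Q"
proof -
  have "pmult Q x z = (\<lambda>r. \<Sum>p\<in>{p. z p \<noteq> 0}. z p * pmult Q x (basis p) r)"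
    by (subst in_pathalg_basis_expansion[OF assms(1)]) (simp add: pmult_sum_right pmult_scale_right)
  then show ?thesis using assms
    by (auto simp: in_pathalg_def intro!: dimer_ideal_sum dimer_ideal_scale dimer_ideal.rmult)
qed

lemma dimer_eq_refl: "dimer_eq Q x x"
  using dimer_ideal.zero by (simp add: dimer_eq_def psub_def)

lemma dimer_eq_sym: "dimer_eq Q x y \<Longrightarrow> dimer_eq Q y x"
  using dimer_ideal_scale[of "psub x y" Q "-1"] by (simp add: dimer_eq_def psub_def)

lemma dimer_eq_trans [trans]: "dimer_eq Q x y \<Longrightarrow> dimer_eq Q y z \<Longrightarrow> dimer_eq Q x z"
  using dimer_ideal.add[of "psub x y" Q "psub y z"] by (simp add: dimer_eq_def psub_def padd_def)

lemma dimer_eq_pmult_left: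
  "in_pathalg Q z \<Longrightarrow> dimer_eq Q x y \<Longrightarrow> dimer_eq Q (pmult Q z x) (pmult Q z y)"
  by (simp add: dimer_eq_def dimer_ideal_pmult_left flip: pmult_psub_right)

lemma dimer_eq_pmult_right:
  "in_pathalg Q z \<Longrightarrow> dimer_eq Q x y \<Longrightarrow> dimer_eq Q (pmult Q x z) (pmult Q y z)"
  by (simp add: dimer_eq_def dimer_ideal_pmult_right flip: pmult_psub_left)

lemma dimer_eq_pmult_basis_left:
  "valid_path Q p \<Longrightarrow> dimer_eq Q x y \<Longrightarrow> dimer_eq Q (pmult Q (basis p) x) (pmult Q (basis p) y)"
  by (simp add: dimer_eq_def dimer_ideal.lmult flip: pmult_psub_right)

lemma dimer_eq_pmult_basis_right:
  "valid_path Q p \<Longrightarrow> dimer_eq Q x y \<Longrightarrow> dimer_eq Q (pmult Q x (basis p)) (pmult Q y (basis p))"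
  by (simp add: dimer_eq_def dimer_ideal.rmult flip: pmult_psub_left)

lemma dimer_eq_path_cat_left:
  assumes "valid_path Q p" "valid_path Q q" "valid_path Q r" "path_end Q p = fst q" "fst r = fst q"
    and "dimer_eq Q (basis q) (basis r)"
  shows "dimer_eq Q (basis (path_cat p q)) (basis (path_cat p r))"
  using dimer_eq_pmult_basis_left[OF assms(1,6)] by (simp add: pmult_basis_path_cat assms)

lemma dimer_eq_path_cat_right:
  assumes "valid_path Q p" "valid_path Q q" "valid_path Q r" "path_end Q q = fst p"
    "path_end Q r = fst p" and "dimer_eq Q (basis q) (basis r)"
  shows "dimer_eq Q (basis (path_cat q p)) (basis (path_cat r p))"
  using dimer_eq_pmult_basis_right[OF assms(1,6)] by (simp add: pmult_basis_path_cat assms)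

lemma dimer_eq_lincomb:
  assumes "finite S" "\<And>i. i \<in> S \<Longrightarrow> dimer_eq Q (x i) (y i)"
  shows "dimer_eq Q (\<lambda>r. \<Sum>i\<in>S. c i * x i r) (\<lambda>r. \<Sum>i\<in>S. c i * y i r)"
proof -
  have "psub (\<lambda>r. \<Sum>i\<in>S. c i * x i r) (\<lambda>r. \<Sum>i\<in>S. c i * y i r) =
      (\<lambda>r. \<Sum>i\<in>S. c i * psub (x i) (y i) r)"
    by (simp add: psub_def sum_subtractf right_diff_distrib)
  then show ?thesis using assms
    by (simp add: dimer_eq_def dimer_ideal_sum dimer_ideal_scale)
qed

lemma central_if_commutes_with_paths:
  assumes "\<And>p. valid_path Q p \<Longrightarrow> dimer_eq Q (pmult Q z (basis p)) (pmult Q (basis p) z)"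
  shows "central Q z"
  unfolding central_def
proof (intro allI impI)
  fix x assume x: "in_pathalg Q x"
  let ?S = "{p. x p \<noteq> 0}"
  have left: "pmult Q z x = (\<lambda>r. \<Sum>p\<in>?S. x p * pmult Q z (basis p) r)"
    by (subst in_pathalg_basis_expansion[OF x]) (simp add: pmult_sum_right pmult_scale_right)
  have right: "pmult Q x z = (\<lambda>r. \<Sum>p\<in>?S. x p * pmult Q (basis p) z r)"
    by (subst in_pathalg_basis_expansion[OF x]) (simp add: pmult_sum_left pmult_scale_left)
  show "dimer_eq Q (pmult Q z x) (pmult Q x z)"
    unfolding left right
    by (rule dimer_eq_lincomb) (use x assms in \<open>auto simp: in_pathalg_def\<close>)
qed

lemma central_punit:
  "finite (Q0 Q) \<Longrightarrow> \<forall>\<alpha>\<in>Q1 Q. tgt Q \<alpha> \<in> Q0 Q \<Longrightarrow> central Q (punit Q)"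
  by (simp add: central_def pmult_punit_left pmult_punit_right dimer_eq_refl)

lemma central_pmult:
  assumes tgt_in: "\<forall>\<alpha>\<in>Q1 Q. tgt Q \<alpha> \<in> Q0 Q"
    and z: "in_pathalg Q z" "central Q z" and w: "in_pathalg Q w" "central Q w"
  shows "central Q (pmult Q z w)"
  unfolding central_def
proof (intro allI impI)
  fix x assume x: "in_pathalg Q x"
  note assoc = pmult_assoc[OF tgt_in]
  have "dimer_eq Q (pmult Q (pmult Q z w) x) (pmult Q z (pmult Q x w))"
    using w x z by (simp add: assoc central_def dimer_eq_pmult_left)
  also have "pmult Q z (pmult Q x w) = pmult Q (pmult Q z x) w" by (rule assoc[symmetric])
  also have "dimer_eq Q \<dots> (pmult Q (pmult Q x z) w)"
    using w x z by (simp add: central_def dimer_eq_pmult_right)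
  also have "pmult Q (pmult Q x z) w = pmult Q x (pmult Q z w)" by (rule assoc)
  finally show "dimer_eq Q (pmult Q (pmult Q z w) x) (pmult Q x (pmult Q z w))" .
qed

lemma central_ppow:
  assumes "finite (Q0 Q)" "\<forall>\<alpha>\<in>Q1 Q. tgt Q \<alpha> \<in> Q0 Q" "in_pathalg Q z" "central Q z"
  shows "central Q (ppow Q z n)"
  by (induction n) (simp_all add: assms central_punit central_pmult in_pathalg_ppow)

lemma central_peval:
  assumes "\<And>k. central Q (ppow Q z k)"
  shows "central Q (peval Q f z)"
  using assms by (simp add: central_def peval_def pmult_sum_left pmult_sum_right pmult_scale_left
      pmult_scale_right dimer_eq_lincomb)

section \<open>Face cycles\<close>

lemma rot_at_eq_rotate: "k < length xs \<Longrightarrow> rot_at xs k = rotate k xs"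
  by (simp add: rot_at_def rotate_drop_take)

definition face_cycle :: "('v, 'a, 'f) qwf \<Rightarrow> 'f \<Rightarrow> nat \<Rightarrow> ('v, 'a) path" where
  "face_cycle Q F k = (src Q (bd Q F ! (k mod length (bd Q F))), rotate k (bd Q F))"

lemma face_cycle_mod: "face_cycle Q F (k mod length (bd Q F)) = face_cycle Q F k"
  by (simp add: face_cycle_def rotate_conv_mod[of k "bd Q F", symmetric])

lemma face_cycle_eq: "k < length (bd Q F) \<Longrightarrow> face_cycle Q F k = (src Q (bd Q F ! k), rotate k (bd Q F))"
  by (simp add: face_cycle_def)

context
  fixes Q :: "('v, 'a, 'f) qwf" and F :: 'f
  assumes cycle: "is_cycle Q (bd Q F)" and src_in: "\<forall>\<alpha>\<in>Q1 Q. src Q \<alpha> \<in> Q0 Q"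
begin

lemma face_bd_ne: "bd Q F \<noteq> []"
  using cycle by (simp add: is_cycle_def)

lemma face_bd_arrows: "k < length (bd Q F) \<Longrightarrow> bd Q F ! k \<in> Q1 Q"
  using cycle by (auto simp: is_cycle_def valid_path_def)

lemma tgt_face_bd_nth:
  assumes "k < length (bd Q F)"
  shows "tgt Q (bd Q F ! k) = src Q (bd Q F ! (Suc k mod length (bd Q F)))"
proof (cases "Suc k < length (bd Q F)")
  case True
  then show ?thesis using cycle by (simp add: is_cycle_def valid_path_def composable_list_def)
next
  case False
  then have "k = length (bd Q F) - 1" using assms by simp
  moreover have "tgt Q (last (bd Q F)) = src Q (hd (bd Q F))" using cycle by (simp add: is_cycle_def)
  ultimately show ?thesis using face_bd_ne by (simp add: last_conv_nth hd_conv_nth)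
qed

lemma rotate_face_bd:
  assumes "k < length (bd Q F)"
  shows "rotate k (bd Q F) = bd Q F ! k # tl (rotate k (bd Q F))"
proof -
  have "rotate k (bd Q F) \<noteq> []" "hd (rotate k (bd Q F)) = bd Q F ! k"
    using face_bd_ne assms by (simp_all add: hd_rotate_conv_nth)
  then show ?thesis by (metis list.collapse)
qed

lemma valid_face_cycle: "valid_path Q (face_cycle Q F k)"
proof -
  let ?c = "bd Q F" and ?n = "length (bd Q F)"
  have n: "0 < ?n" using face_bd_ne by simp
  have "composable_list Q (rotate k ?c)"
    unfolding composable_list_def
  proof (intro allI impI)
    fix m assume m: "Suc m < length (rotate k ?c)"
    have "tgt Q (?c ! ((k + m) mod ?n)) = src Q (?c ! (Suc ((k + m) mod ?n) mod ?n))"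
      using tgt_face_bd_nth n by simp
    also have "Suc ((k + m) mod ?n) mod ?n = (k + Suc m) mod ?n" by (simp add: mod_Suc_eq)
    finally show "tgt Q (rotate k ?c ! m) = src Q (rotate k ?c ! Suc m)"
      using m by (simp add: nth_rotate)
  qed
  moreover have "hd (rotate k ?c) = ?c ! (k mod ?n)"
    using face_bd_ne by (simp add: hd_rotate_conv_nth)
  moreover have "set ?c \<subseteq> Q1 Q" using cycle by (simp add: is_cycle_def valid_path_def)
  ultimately show ?thesis
    using src_in face_bd_arrows[of "k mod ?n"] n by (simp add: face_cycle_def valid_path_def)
qed

lemma path_end_face_cycle: "path_end Q (face_cycle Q F k) = fst (face_cycle Q F k)"
proof -
  let ?c = "bd Q F" and ?n = "length (bd Q F)"
  obtain m where m: "?n = Suc m" using face_bd_ne by (cases ?n) auto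
  have "last (rotate k ?c) = ?c ! ((k + m) mod ?n)"
    using face_bd_ne m by (simp add: last_conv_nth nth_rotate)
  moreover have "tgt Q (?c ! ((k + m) mod ?n)) = src Q (?c ! (k mod ?n))"
    using tgt_face_bd_nth[of "(k + m) mod ?n"] m by (simp add: mod_Suc_eq flip: add_Suc_right)
  ultimately show ?thesis using face_bd_ne by (simp add: face_cycle_def path_end_simp)
qed

lemma face_cycle_Suc:
  assumes "k < length (bd Q F)"
  shows "face_cycle Q F (Suc k) = (tgt Q (bd Q F ! k), tl (rotate k (bd Q F)) @ [bd Q F ! k])"
proof -
  have "rotate (Suc k) (bd Q F) = rotate1 (rotate k (bd Q F))" by simp
  also have "\<dots> = tl (rotate k (bd Q F)) @ [bd Q F ! k]"
    using rotate_face_bd[OF assms] by (metis rotate1.simps(2))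
  finally show ?thesis using tgt_face_bd_nth[OF assms] by (simp add: face_cycle_def)
qed

lemma face_cycle_rotate_arrow:
  assumes "k < length (bd Q F)"
  defines "\<alpha> \<equiv> bd Q F ! k"
  shows "path_cat (face_cycle Q F k) (src Q \<alpha>, [\<alpha>]) = path_cat (src Q \<alpha>, [\<alpha>]) (face_cycle Q F (Suc k))"
  using face_cycle_eq[OF assms(1)] face_cycle_Suc[OF assms(1)] rotate_face_bd[OF assms(1)]
  by (simp add: path_cat_def \<alpha>_def)

lemma basis_face_cycle_eq_arrow_pF:
  assumes "k < length (bd Q F)"
  defines "\<alpha> \<equiv> bd Q F ! k"
  shows "basis (face_cycle Q F k) = pmult Q (basis (src Q \<alpha>, [\<alpha>])) (basis (pF Q F k))"
proof -
  have "path_cat (src Q \<alpha>, [\<alpha>]) (pF Q F k) = face_cycle Q F k"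
    using rotate_face_bd[OF assms(1)]
    by (simp add: path_cat_def pF_def rot_at_eq_rotate face_cycle_eq assms)
  moreover have "vert_at Q (path_cat (src Q \<alpha>, [\<alpha>]) (pF Q F k)) 1 = fst (pF Q F k)"
    by (simp add: path_cat_def pF_def vert_at_def \<alpha>_def)
  ultimately show ?thesis using valid_face_cycle by (simp add: pmult_basis_basis)
qed

lemma basis_face_cycle_Suc_eq_pF_arrow:
  assumes "k < length (bd Q F)"
  defines "\<alpha> \<equiv> bd Q F ! k"
  shows "basis (face_cycle Q F (Suc k)) = pmult Q (basis (pF Q F k)) (basis (src Q \<alpha>, [\<alpha>]))"
proof -
  let ?p = "tl (rotate k (bd Q F))"
  have cat: "path_cat (pF Q F k) (src Q \<alpha>, [\<alpha>]) = face_cycle Q F (Suc k)"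
    by (simp add: path_cat_def pF_def rot_at_eq_rotate face_cycle_Suc assms)
  have "valid_path Q (tgt Q \<alpha>, ?p @ [\<alpha>])"
    using valid_face_cycle[of "Suc k"] face_cycle_Suc[OF assms(1)] by (simp add: \<alpha>_def)
  then have "src Q ((?p @ [\<alpha>]) ! length ?p) = vert_at Q (tgt Q \<alpha>, ?p @ [\<alpha>]) (length ?p)"
    by (rule src_nth_eq_vert_at) simp
  then have "vert_at Q (path_cat (pF Q F k) (src Q \<alpha>, [\<alpha>])) (length (snd (pF Q F k))) = src Q \<alpha>"
    by (simp add: path_cat_def pF_def rot_at_eq_rotate assms del: length_tl)
  then show ?thesis using valid_face_cycle[of "Suc k"] cat by (simp add: pmult_basis_basis)
qed

end

section \<open>The elements u_i\<close>

lemma dimer_quiver_finite_Q0: "dimer_quiver Q \<Longrightarrow> finite (Q0 Q)"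
  by (simp add: dimer_quiver_def)

lemma dimer_quiver_finite_Q2: "dimer_quiver Q \<Longrightarrow> finite (Q2 Q)"
  by (simp add: dimer_quiver_def)

lemma dimer_quiver_src_in_Q0: "dimer_quiver Q \<Longrightarrow> \<forall>\<alpha>\<in>Q1 Q. src Q \<alpha> \<in> Q0 Q"
  by (simp add: dimer_quiver_def)

lemma dimer_quiver_tgt_in_Q0: "dimer_quiver Q \<Longrightarrow> \<forall>\<alpha>\<in>Q1 Q. tgt Q \<alpha> \<in> Q0 Q"
  by (simp add: dimer_quiver_def)

lemma dimer_quiver_face_is_cycle: "dimer_quiver Q \<Longrightarrow> F \<in> Q2 Q \<Longrightarrow> is_cycle Q (bd Q F)"
  by (simp add: dimer_quiver_def)

lemma dimer_quiver_no_loops: "dimer_quiver Q \<Longrightarrow> \<alpha> \<in> Q1 Q \<Longrightarrow> src Q \<alpha> \<noteq> tgt Q \<alpha>"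
  by (simp add: dimer_quiver_def)

lemma dimer_quiver_occ: "dimer_quiver Q \<Longrightarrow> \<alpha> \<in> Q1 Q \<Longrightarrow> occ Q \<alpha> = 1 \<or> occ Q \<alpha> = 2"
  by (simp add: dimer_quiver_def)

lemma dimer_quiver_occ_two:
  "dimer_quiver Q \<Longrightarrow> \<alpha> \<in> Q1 Q \<Longrightarrow> occ Q \<alpha> = 2 \<Longrightarrow>
    \<exists>F1\<in>Q2p Q. \<exists>F2\<in>Q2m Q. \<alpha> \<in> set (bd Q F1) \<and> \<alpha> \<in> set (bd Q F2)"
  unfolding dimer_quiver_def by blast

lemma dimer_quiver_faces_disjoint: "dimer_quiver Q \<Longrightarrow> Q2p Q \<inter> Q2m Q = {}"
  by (simp add: dimer_quiver_def)

lemma dimer_quiver_arrows_at: "dimer_quiver Q \<Longrightarrow> i \<in> Q0 Q \<Longrightarrow> arrows_at Q i \<noteq> {}"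
  by (simp add: dimer_quiver_def)

lemma dimer_quiver_inc_connected: "dimer_quiver Q \<Longrightarrow> i \<in> Q0 Q \<Longrightarrow> inc_connected Q i"
  by (simp add: dimer_quiver_def)

definition arrow_occs :: "('v, 'a, 'f) qwf \<Rightarrow> 'a \<Rightarrow> ('f \<times> nat) set" where
  "arrow_occs Q \<alpha> = {(F, k). F \<in> Q2 Q \<and> k < length (bd Q F) \<and> bd Q F ! k = \<alpha>}"

lemma arrow_occs_eq_Sigma:
  "arrow_occs Q \<alpha> = Sigma (Q2 Q) (\<lambda>F. {k. k < length (bd Q F) \<and> bd Q F ! k = \<alpha>})"
  by (auto simp: arrow_occs_def)

lemma finite_arrow_occs: "finite (Q2 Q) \<Longrightarrow> finite (arrow_occs Q \<alpha>)"
  by (simp add: arrow_occs_eq_Sigma)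

lemma card_arrow_occs: "finite (Q2 Q) \<Longrightarrow> card (arrow_occs Q \<alpha>) = occ Q \<alpha>"
  by (simp add: arrow_occs_eq_Sigma occ_def count_list_eq_length_filter
      length_filter_conv_card eq_commute)

lemma arrow_occs_nonempty:
  assumes "dimer_quiver Q" "\<alpha> \<in> Q1 Q"
  obtains F k where "F \<in> Q2 Q" "k < length (bd Q F)" "bd Q F ! k = \<alpha>"
proof -
  have "card (arrow_occs Q \<alpha>) \<noteq> 0"
    using dimer_quiver_occ[OF assms] card_arrow_occs[OF dimer_quiver_finite_Q2[OF assms(1)]] by auto
  then obtain oc where "oc \<in> arrow_occs Q \<alpha>" by (metis card.empty ex_in_conv)
  then show ?thesis using that by (cases oc) (auto simp: arrow_occs_def)
qed

definition same_face_cycles :: "('v, 'a, 'f) qwf \<Rightarrow> 'f \<times> nat \<Rightarrow> 'f \<times> nat \<Rightarrow> bool" where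
  "same_face_cycles Q o1 o2 \<longleftrightarrow>
     dimer_eq Q (basis (face_cycle Q (fst o1) (snd o1))) (basis (face_cycle Q (fst o2) (snd o2))) \<and>
     dimer_eq Q (basis (face_cycle Q (fst o1) (Suc (snd o1))))
       (basis (face_cycle Q (fst o2) (Suc (snd o2))))"

lemma same_face_cycles_refl: "same_face_cycles Q o1 o1"
  by (simp add: same_face_cycles_def dimer_eq_refl)

lemma same_face_cycles_sym: "same_face_cycles Q o1 o2 \<Longrightarrow> same_face_cycles Q o2 o1"
  by (simp add: same_face_cycles_def dimer_eq_sym)

lemma same_face_cycles_internal:
  assumes Q: "dimer_quiver Q" and \<alpha>: "internal Q \<alpha>" and F: "F1 \<in> Q2p Q" "F2 \<in> Q2m Q"
    and k: "k1 < length (bd Q F1)" "bd Q F1 ! k1 = \<alpha>" "k2 < length (bd Q F2)" "bd Q F2 ! k2 = \<alpha>"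
  shows "same_face_cycles Q (F1, k1) (F2, k2)"
proof -
  have rel: "dimer_eq Q (basis (pF Q F1 k1)) (basis (pF Q F2 k2))"
    unfolding dimer_eq_def
    by (rule dimer_ideal.rel) (unfold dimer_relations_def, use assms in blast)
  have "F1 \<in> Q2 Q" "F2 \<in> Q2 Q" using F by (auto simp: Q2_def)
  note cycles = dimer_quiver_face_is_cycle[OF Q this(1)] dimer_quiver_face_is_cycle[OF Q this(2)]
  have "valid_path Q (src Q \<alpha>, [\<alpha>])"
    using \<alpha> dimer_quiver_src_in_Q0[OF Q] by (auto simp: internal_def valid_path_def)
  then show ?thesis
    using dimer_eq_pmult_basis_left[OF _ rel] dimer_eq_pmult_basis_right[OF _ rel] k
      basis_face_cycle_eq_arrow_pF[OF cycles(1) _ k(1)] basis_face_cycle_eq_arrow_pF[OF cycles(2) _ k(3)]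
      basis_face_cycle_Suc_eq_pF_arrow[OF cycles(1) _ k(1)]
      basis_face_cycle_Suc_eq_pF_arrow[OF cycles(2) _ k(3)] dimer_quiver_src_in_Q0[OF Q]
    by (simp add: same_face_cycles_def)
qed

lemma same_face_cycles_arrow_occs:
  assumes Q: "dimer_quiver Q" and \<alpha>: "\<alpha> \<in> Q1 Q" and o: "o1 \<in> arrow_occs Q \<alpha>" "o2 \<in> arrow_occs Q \<alpha>"
  shows "same_face_cycles Q o1 o2"
  using dimer_quiver_occ[OF Q \<alpha>]
proof
  assume "occ Q \<alpha> = 1"
  then have "card (arrow_occs Q \<alpha>) = 1" by (simp add: card_arrow_occs dimer_quiver_finite_Q2[OF Q])
  then obtain oc where "arrow_occs Q \<alpha> = {oc}" by (rule card_1_singletonE)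
  then show ?thesis using o by (simp add: same_face_cycles_refl)
next
  assume two: "occ Q \<alpha> = 2"
  then obtain F1 F2 where F: "F1 \<in> Q2p Q" "F2 \<in> Q2m Q" "\<alpha> \<in> set (bd Q F1)" "\<alpha> \<in> set (bd Q F2)"
    using dimer_quiver_occ_two[OF Q \<alpha>] by blast
  obtain k1 k2 where k: "k1 < length (bd Q F1)" "bd Q F1 ! k1 = \<alpha>"
    "k2 < length (bd Q F2)" "bd Q F2 ! k2 = \<alpha>"
    using F(3,4) by (meson in_set_conv_nth)
  have "F1 \<noteq> F2" using F(1,2) dimer_quiver_faces_disjoint[OF Q] by blast
  then have "card {(F1, k1), (F2, k2)} = card (arrow_occs Q \<alpha>)"
    using two by (simp add: card_arrow_occs dimer_quiver_finite_Q2[OF Q])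
  moreover have "{(F1, k1), (F2, k2)} \<subseteq> arrow_occs Q \<alpha>"
    using F k by (auto simp: arrow_occs_def Q2_def)
  ultimately have occs: "arrow_occs Q \<alpha> = {(F1, k1), (F2, k2)}"
    using card_subset_eq[OF finite_arrow_occs[OF dimer_quiver_finite_Q2[OF Q]]] by metis
  have "internal Q \<alpha>" using \<alpha> two by (simp add: internal_def)
  then have "same_face_cycles Q (F1, k1) (F2, k2)"
    using same_face_cycles_internal[OF Q _ F(1,2) k] by blast
  then show ?thesis
    using o unfolding occs by (auto simp: same_face_cycles_refl same_face_cycles_sym)
qed

(* meant for i = src Q \<alpha> or i = tgt Q \<alpha>: the face cycle of the occurrence oc of \<alpha>, read from i *)
definition occ_cycle_at :: "('v, 'a, 'f) qwf \<Rightarrow> 'v \<Rightarrow> 'a \<Rightarrow> 'f \<times> nat \<Rightarrow> ('v, 'a) path" where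
  "occ_cycle_at Q i \<alpha> oc = face_cycle Q (fst oc) (if src Q \<alpha> = i then snd oc else Suc (snd oc))"

lemma occ_cycle_at_arrow_occs:
  assumes "dimer_quiver Q" "\<alpha> \<in> Q1 Q" "oc \<in> arrow_occs Q \<alpha>" "oc' \<in> arrow_occs Q \<alpha>"
  shows "dimer_eq Q (basis (occ_cycle_at Q i \<alpha> oc)) (basis (occ_cycle_at Q i \<alpha> oc'))"
  using same_face_cycles_arrow_occs[OF assms] by (simp add: same_face_cycles_def occ_cycle_at_def)

lemma inc_edge_shared_occ_cycle:
  assumes Q: "dimer_quiver Q" and e: "inc_edge Q i \<alpha> \<beta>"
  obtains oc oc' where "oc \<in> arrow_occs Q \<alpha>" "oc' \<in> arrow_occs Q \<beta>"
    "occ_cycle_at Q i \<alpha> oc = occ_cycle_at Q i \<beta> oc'"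
proof -
  obtain H where H: "H \<in> Q2 Q" "consec_in (bd Q H) \<alpha> \<beta>" and \<alpha>\<beta>: "\<alpha> \<in> Q1 Q"
    "tgt Q \<alpha> = i" "src Q \<beta> = i"
    using e unfolding inc_edge_def by blast
  let ?n = "length (bd Q H)"
  obtain m where m: "m < ?n" "bd Q H ! m = \<alpha>" "bd Q H ! (Suc m mod ?n) = \<beta>"
    using H(2) unfolding consec_in_def by blast
  have "(H, m) \<in> arrow_occs Q \<alpha>" "(H, Suc m mod ?n) \<in> arrow_occs Q \<beta>"
    using H(1) m by (auto simp: arrow_occs_def intro: mod_less_divisor)
  moreover have "src Q \<alpha> \<noteq> i" using \<alpha>\<beta> dimer_quiver_no_loops[OF Q] by auto
  then have "occ_cycle_at Q i \<alpha> (H, m) = occ_cycle_at Q i \<beta> (H, Suc m mod ?n)"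
    using \<alpha>\<beta>(3) by (simp add: occ_cycle_at_def face_cycle_mod)
  ultimately show ?thesis by (rule that)
qed

lemma face_cycles_at_vertex_agree:
  assumes Q: "dimer_quiver Q"
    and F: "F \<in> Q2 Q" "k < length (bd Q F)" "src Q (bd Q F ! k) = i"
    and G: "G \<in> Q2 Q" "j < length (bd Q G)" "src Q (bd Q G ! j) = i"
  shows "dimer_eq Q (basis (face_cycle Q F k)) (basis (face_cycle Q G j))"
proof -
  define agrees where "agrees \<alpha> \<longleftrightarrow> (\<forall>oc\<in>arrow_occs Q \<alpha>.
      dimer_eq Q (basis (face_cycle Q F k)) (basis (occ_cycle_at Q i \<alpha> oc)))" for \<alpha>
  have agrees_iff: "agrees \<alpha> \<longleftrightarrow> dimer_eq Q (basis (face_cycle Q F k)) (basis (occ_cycle_at Q i \<alpha> oc))"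
    if "\<alpha> \<in> Q1 Q" "oc \<in> arrow_occs Q \<alpha>" for \<alpha> oc
    using occ_cycle_at_arrow_occs[OF Q that] occ_cycle_at_arrow_occs[OF Q that(1) _ that(2)] that(2)
    by (auto simp: agrees_def intro: dimer_eq_trans)
  have edge: "agrees \<alpha> \<longleftrightarrow> agrees \<beta>" if e: "inc_edge Q i \<alpha> \<beta>" for \<alpha> \<beta>
  proof -
    have "\<alpha> \<in> Q1 Q" "\<beta> \<in> Q1 Q" using e by (simp_all add: inc_edge_def)
    then show ?thesis
      using agrees_iff inc_edge_shared_occ_cycle[OF Q e] by metis
  qed
  let ?\<alpha> = "bd Q F ! k" and ?\<beta> = "bd Q G ! j"
  note cycles = dimer_quiver_face_is_cycle[OF Q F(1)] dimer_quiver_face_is_cycle[OF Q G(1)]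
  have arrows: "?\<alpha> \<in> Q1 Q" "?\<beta> \<in> Q1 Q"
    using face_bd_arrows[OF cycles(1) _ F(2)] face_bd_arrows[OF cycles(2) _ G(2)]
      dimer_quiver_src_in_Q0[OF Q] by auto
  have occs: "(F, k) \<in> arrow_occs Q ?\<alpha>" "(G, j) \<in> arrow_occs Q ?\<beta>"
    using F G by (auto simp: arrow_occs_def)
  have "i \<in> Q0 Q" using arrows(1) F(3) dimer_quiver_src_in_Q0[OF Q] by auto
  then have "(?\<alpha>, ?\<beta>) \<in> {(x, y). inc_edge Q i x y \<or> inc_edge Q i y x}\<^sup>*"
    using dimer_quiver_inc_connected[OF Q] arrows F(3) G(3)
    by (simp add: inc_connected_def arrows_at_def)
  then have "agrees ?\<beta>"
  proof (induction rule: rtrancl_induct)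
    case base
    show ?case using agrees_iff[OF arrows(1) occs(1)] F(3) by (simp add: occ_cycle_at_def dimer_eq_refl)
  next
    case (step \<gamma> \<delta>)
    then show ?case using edge by blast
  qed
  then show ?thesis using agrees_iff[OF arrows(2) occs(2)] G(3) by (simp add: occ_cycle_at_def)
qed

definition u_path :: "('v, 'a, 'f) qwf \<Rightarrow> 'v \<Rightarrow> ('v, 'a) path" where
  "u_path Q i = (SOME c. c \<in> face_cycles_at Q i)"

lemma u_elem_eq_basis_u_path: "u_elem Q i = basis (u_path Q i)"
  by (simp add: u_elem_def u_path_def)

lemma face_cycles_at_nonempty:
  assumes Q: "dimer_quiver Q" and i: "i \<in> Q0 Q"
  shows "face_cycles_at Q i \<noteq> {}"
proof -
  obtain \<alpha> where \<alpha>: "\<alpha> \<in> Q1 Q" "src Q \<alpha> = i \<or> tgt Q \<alpha> = i"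
    using dimer_quiver_arrows_at[OF Q i] by (auto simp: arrows_at_def)
  obtain F k where F: "F \<in> Q2 Q" "k < length (bd Q F)" "bd Q F ! k = \<alpha>"
    using arrow_occs_nonempty[OF Q \<alpha>(1)] .
  let ?n = "length (bd Q F)"
  have n: "0 < ?n" using F(2) by linarith
  show ?thesis
  proof (cases "src Q \<alpha> = i")
    case True
    then have "(i, rot_at (bd Q F) k) \<in> face_cycles_at Q i"
      unfolding face_cycles_at_def using F by blast
    then show ?thesis by blast
  next
    case False
    then have "src Q (bd Q F ! (Suc k mod ?n)) = i"
      using \<alpha> F tgt_face_bd_nth[OF dimer_quiver_face_is_cycle[OF Q F(1)] _ F(2)]
        dimer_quiver_src_in_Q0[OF Q] by auto
    moreover have "Suc k mod ?n < ?n" using n by simp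
    ultimately have "(i, rot_at (bd Q F) (Suc k mod ?n)) \<in> face_cycles_at Q i"
      unfolding face_cycles_at_def using F(1) by blast
    then show ?thesis by blast
  qed
qed

lemma u_path_face_cycle:
  assumes "dimer_quiver Q" "i \<in> Q0 Q"
  obtains F k where "F \<in> Q2 Q" "k < length (bd Q F)" "src Q (bd Q F ! k) = i"
    "u_path Q i = face_cycle Q F k"
proof -
  have "u_path Q i \<in> face_cycles_at Q i"
    unfolding u_path_def using face_cycles_at_nonempty[OF assms] by (simp add: some_in_eq)
  then obtain F k where "F \<in> Q2 Q" "k < length (bd Q F)" "src Q (bd Q F ! k) = i"
    "u_path Q i = (i, rot_at (bd Q F) k)"
    unfolding face_cycles_at_def by blast
  then show ?thesis using that by (simp add: rot_at_eq_rotate face_cycle_eq)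
qed

lemma u_path_eq_face_cycle:
  assumes Q: "dimer_quiver Q" and F: "F \<in> Q2 Q" "k < length (bd Q F)" "src Q (bd Q F ! k) = i"
  shows "dimer_eq Q (basis (u_path Q i)) (basis (face_cycle Q F k))"
proof -
  have "i \<in> Q0 Q"
    using F face_bd_arrows[OF dimer_quiver_face_is_cycle[OF Q F(1)]] dimer_quiver_src_in_Q0[OF Q] by auto
  then obtain G j where "G \<in> Q2 Q" "j < length (bd Q G)" "src Q (bd Q G ! j) = i"
    "u_path Q i = face_cycle Q G j"
    by (rule u_path_face_cycle[OF Q])
  then show ?thesis using face_cycles_at_vertex_agree[OF Q] F by simp
qed

lemma u_path_cycle_at:
  assumes Q: "dimer_quiver Q" and i: "i \<in> Q0 Q"
  shows "valid_path Q (u_path Q i)" "fst (u_path Q i) = i" "path_end Q (u_path Q i) = i"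
proof -
  obtain F k where F: "F \<in> Q2 Q" "k < length (bd Q F)" "src Q (bd Q F ! k) = i"
    and u: "u_path Q i = face_cycle Q F k"
    by (rule u_path_face_cycle[OF Q i])
  note cycle = dimer_quiver_face_is_cycle[OF Q F(1)] dimer_quiver_src_in_Q0[OF Q]
  show "valid_path Q (u_path Q i)" using valid_face_cycle[OF cycle] u by simp
  show "fst (u_path Q i) = i" using face_cycle_eq[OF F(2)] F(3) u by simp
  then show "path_end Q (u_path Q i) = i" using path_end_face_cycle[OF cycle] u by simp
qed

lemma u_path_commutes_with_arrow:
  assumes Q: "dimer_quiver Q" and \<alpha>: "\<alpha> \<in> Q1 Q"
  defines "a \<equiv> (src Q \<alpha>, [\<alpha>])"
  shows "dimer_eq Q (basis (path_cat (u_path Q (src Q \<alpha>)) a)) (basis (path_cat a (u_path Q (tgt Q \<alpha>))))"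
proof -
  let ?i = "src Q \<alpha>" and ?j = "tgt Q \<alpha>"
  have "?i \<in> Q0 Q" "?j \<in> Q0 Q"
    using \<alpha> dimer_quiver_src_in_Q0[OF Q] dimer_quiver_tgt_in_Q0[OF Q] by auto
  note ui = u_path_cycle_at[OF Q this(1)] and uj = u_path_cycle_at[OF Q this(2)]
  obtain F k where F: "F \<in> Q2 Q" "k < length (bd Q F)" "bd Q F ! k = \<alpha>"
    using arrow_occs_nonempty[OF Q \<alpha>] .
  note cycle = dimer_quiver_face_is_cycle[OF Q F(1)] dimer_quiver_src_in_Q0[OF Q]
  let ?n = "length (bd Q F)"
  have valid_a: "valid_path Q a" using \<alpha> ui(1,2) by (simp add: a_def valid_path_def)
  have valid_F: "valid_path Q (face_cycle Q F m)" for m by (rule valid_face_cycle[OF cycle])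
  have end_F: "path_end Q (face_cycle Q F k) = fst a"
    using path_end_face_cycle[OF cycle, of k] face_cycle_eq[OF F(2)] F(3) by (simp add: a_def)
  have start_F: "fst (face_cycle Q F (Suc k)) = ?j"
    using face_cycle_Suc[OF cycle F(2)] F(3) by simp
  have "Suc k mod ?n < ?n" by (intro mod_less_divisor) (use F(2) in linarith)
  moreover have "src Q (bd Q F ! (Suc k mod ?n)) = ?j"
    using F tgt_face_bd_nth[OF cycle F(2)] by simp
  ultimately have u_j: "dimer_eq Q (basis (u_path Q ?j)) (basis (face_cycle Q F (Suc k)))"
    using u_path_eq_face_cycle[OF Q F(1)] face_cycle_mod by metis
  have u_i: "dimer_eq Q (basis (u_path Q ?i)) (basis (face_cycle Q F k))"
    using u_path_eq_face_cycle[OF Q F(1,2)] F(3) by simp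
  have "dimer_eq Q (basis (path_cat (u_path Q ?i) a)) (basis (path_cat (face_cycle Q F k) a))"
    using dimer_eq_path_cat_right[OF valid_a ui(1) valid_F _ end_F u_i] ui(3) by (simp add: a_def)
  also have "path_cat (face_cycle Q F k) a = path_cat a (face_cycle Q F (Suc k))"
    using face_cycle_rotate_arrow[OF cycle F(2)] F(3) by (simp add: a_def)
  also have "dimer_eq Q (basis (path_cat a (face_cycle Q F (Suc k)))) (basis (path_cat a (u_path Q ?j)))"
    using dimer_eq_path_cat_left[OF valid_a valid_F uj(1) _ _ dimer_eq_sym[OF u_j]] start_F uj(2)
    by (simp add: a_def path_end_simp)
  finally show ?thesis .
qed

section \<open>Centrality of t\<close>

lemma u_path_commutes_with_path:
  assumes Q: "dimer_quiver Q"
  shows "valid_path Q (v, as) \<Longrightarrow> dimer_eq Q (basis (path_cat (u_path Q v) (v, as)))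
    (basis (path_cat (v, as) (u_path Q (path_end Q (v, as)))))"
proof (induction as arbitrary: v)
  case Nil
  then have "v \<in> Q0 Q" by (simp add: valid_path_def)
  then have "path_cat (u_path Q v) (v, []) = path_cat (v, []) (u_path Q v)"
    using u_path_cycle_at(2)[OF Q] by (simp add: path_cat_def prod_eq_iff)
  then show ?case by (simp add: path_end_simp dimer_eq_refl)
next
  case (Cons \<alpha> as)
  note tgt_in = dimer_quiver_tgt_in_Q0[OF Q]
  let ?j = "tgt Q \<alpha>" and ?a = "(v, [\<alpha>])" and ?p = "(tgt Q \<alpha>, as)"
  have v: "v \<in> Q0 Q" "\<alpha> \<in> Q1 Q" "src Q \<alpha> = v" and valid_p: "valid_path Q ?p"
    using Cons.prems valid_path_Cons[OF tgt_in] by auto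
  let ?w = "path_end Q ?p"
  have "?j \<in> Q0 Q" using tgt_in v by auto
  note uv = u_path_cycle_at[OF Q v(1)] and uj = u_path_cycle_at[OF Q this]
    and uw = u_path_cycle_at[OF Q path_end_in_Q0[OF tgt_in valid_p]]
  have valid_a: "valid_path Q ?a" and end_a: "path_end Q ?a = ?j"
    using v by (simp_all add: valid_path_def path_end_simp)
  have "path_cat (u_path Q v) (v, \<alpha> # as) = path_cat (path_cat (u_path Q v) ?a) ?p"
    by (simp add: path_cat_def)
  also have "dimer_eq Q (basis \<dots>) (basis (path_cat (path_cat ?a (u_path Q ?j)) ?p))"
    using u_path_commutes_with_arrow[OF Q v(2)] v(3) uv uj valid_a end_a
    by (intro dimer_eq_path_cat_right)
      (simp_all add: valid_p valid_path_cat path_end_cat)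
  also have "path_cat (path_cat ?a (u_path Q ?j)) ?p = path_cat ?a (path_cat (u_path Q ?j) ?p)"
    by (rule path_cat_assoc)
  also have "dimer_eq Q (basis \<dots>) (basis (path_cat ?a (path_cat ?p (u_path Q ?w))))"
    using Cons.IH[OF valid_p] uj uw valid_a end_a valid_p
    by (intro dimer_eq_path_cat_left) (simp_all add: valid_path_cat)
  also have "path_cat ?a (path_cat ?p (u_path Q ?w)) =
      path_cat (v, \<alpha> # as) (u_path Q (path_end Q (v, \<alpha> # as)))"
    by (simp add: path_cat_def path_end_simp)
  finally show ?case .
qed

lemma pmult_t_elem_basis:
  assumes Q: "dimer_quiver Q" and p: "valid_path Q p"
  shows "pmult Q (t_elem Q) (basis p) = basis (path_cat (u_path Q (fst p)) p)"
proof -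
  have "pmult Q (basis (u_path Q i)) (basis p) =
      (if i = fst p then basis (path_cat (u_path Q (fst p)) p) else (\<lambda>_. 0))" if "i \<in> Q0 Q" for i
    using pmult_basis_basis_valid[OF u_path_cycle_at(1)[OF Q that] p] u_path_cycle_at(3)[OF Q that] by auto
  moreover have "fst p \<in> Q0 Q" using p by (simp add: valid_path_def)
  ultimately show ?thesis
    using dimer_quiver_finite_Q0[OF Q]
    by (simp add: t_elem_def u_elem_eq_basis_u_path pmult_sum_left if_distrib[of "\<lambda>f. f _"]
        cong: sum.cong)
qed

lemma pmult_basis_t_elem:
  assumes Q: "dimer_quiver Q" and p: "valid_path Q p"
  shows "pmult Q (basis p) (t_elem Q) = basis (path_cat p (u_path Q (path_end Q p)))"
proof -
  have "pmult Q (basis p) (basis (u_path Q i)) =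
      (if i = path_end Q p then basis (path_cat p (u_path Q (path_end Q p))) else (\<lambda>_. 0))"
    if "i \<in> Q0 Q" for i
    using pmult_basis_basis_valid[OF p u_path_cycle_at(1)[OF Q that]] u_path_cycle_at(2)[OF Q that] by auto
  moreover have "path_end Q p \<in> Q0 Q" using path_end_in_Q0[OF dimer_quiver_tgt_in_Q0[OF Q] p] .
  ultimately show ?thesis
    using dimer_quiver_finite_Q0[OF Q]
    by (simp add: t_elem_def u_elem_eq_basis_u_path pmult_sum_right if_distrib[of "\<lambda>f. f _"]
        cong: sum.cong)
qed

lemma central_t_elem: "dimer_quiver Q \<Longrightarrow> central Q (t_elem Q)"
  by (rule central_if_commutes_with_paths)
    (metis pmult_t_elem_basis pmult_basis_t_elem u_path_commutes_with_path prod.collapse)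

lemma in_pathalg_t_elem:
  assumes Q: "dimer_quiver Q"
  shows "in_pathalg Q (t_elem Q)"
proof -
  have support: "{r. t_elem Q r \<noteq> 0} \<subseteq> u_path Q ` Q0 Q"
  proof
    fix r assume "r \<in> {r. t_elem Q r \<noteq> 0}"
    then obtain i where "i \<in> Q0 Q" "basis (u_path Q i) r \<noteq> 0"
      by (auto simp: t_elem_def u_elem_eq_basis_u_path dest: sum.not_neutral_contains_not_neutral)
    then show "r \<in> u_path Q ` Q0 Q" by (auto simp: basis_def split: if_splits)
  qed
  then have "finite {r. t_elem Q r \<noteq> 0}"
    by (rule finite_subset) (simp add: dimer_quiver_finite_Q0[OF Q])
  then show ?thesis using support u_path_cycle_at(1)[OF Q] by (auto simp: in_pathalg_def)
qed

theorem lemma1p8: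
  fixes Q :: "('v, 'a, 'f) qwf"
  assumes "dimer_quiver Q"
  shows "\<forall>f :: complex poly. central Q (peval Q f (t_elem Q))"
proof
  fix f :: "complex poly"
  have "central Q (ppow Q (t_elem Q) k)" for k
    using assms by (simp add: central_ppow dimer_quiver_finite_Q0 dimer_quiver_tgt_in_Q0
        in_pathalg_t_elem central_t_elem)
  then show "central Q (peval Q f (t_elem Q))" by (rule central_peval)
qed

end
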